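(* Let $\mathcal G=(\mathcal V,\mathcal E)$ be a hypergraph with $\mathcal V=[n]$, all of whose edges are nonempty, with special vertices $\mathcal V^{\mathrm{sp}}$, and let $\mathbf m\in\mathbb Z_{\ge0}^n$. Then, as polynomials in $q$ (equivalently, for every positive integer $q$), \[ {}_{\mathbf m}\Pi^{\mathrm{mark}}_{\mathcal G}(q)=\sum_{\underline{\boldsymbol\lambda}\in S(\mathbf m)}\frac{\Pi_{\mathcal G(\underline{\boldsymbol\lambda},\mathbf m)}(q)}{\prod_{i\in\mathrm{supp}(\mathbf m)}\prod_{k\ge1}\bigl(d_k^{\boldsymbol\lambda_i}\bigr)!}. \]
   Context: Hypergraph, special vertices $\mathcal V^{\mathrm{sp}}\subseteq\mathcal V=[n]$, and ${}_{\mathbf m}\Pi^{\mathrm{mark}}_{\mathcal G}(q)$: for $q\in\mathbb N$, the number of maps $\Gamma$ assigning to each vertex $v$ a finite multiset $\Gamma(v)$ of elements of $\{1,\dots,q\}$ with $\Gamma(v)$ a set for $v\notin\mathcal V^{\mathrm{sp}}$, $|\Gamma(v)|=m_v$ (with multiplicity), and, for each edge $e$, the underlying sets of $\Gamma(v)$, $v\in e$, having empty common intersection. For a hypergraph $\mathcal H$, $\Pi_{\mathcal H}(q)$ is its ordinary chromatic polynomial: the number of maps $c$ from the vertex set to $\{1,\dots,q\}$ such that no edge is monochromatic (i.e. for each edge $e$, $c$ is not constant on $e$). A partition $\lambda$ of $m$ is a weakly decreasing tuple of positive integers summing to $m$; $\ell(\lambda)$ is its number of parts and $d_k^\lambda$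 the number of parts equal to $k$; the empty partition of $0$ has length $0$. $S(\mathbf m)$ is the set of tuples $\underline{\boldsymbol\lambda}=(\boldsymbol\lambda_i)_{i\in[n]}$ with $\boldsymbol\lambda_i$ a partition of $m_i$ and $\boldsymbol\lambda_i=(1^{m_i})$ for $i\notin\mathcal V^{\mathrm{sp}}$. For $\underline{\boldsymbol\lambda}\in S(\mathbf m)$, $\mathcal G(\underline{\boldsymbol\lambda},\mathbf m)$ is the hypergraph with vertex set $\{(i,r): i\in\mathrm{supp}(\mathbf m),\ 1\le r\le\ell(\boldsymbol\lambda_i)\}$ and edges: (a) $\{(i,r),(i,s)\}$ for each $i\in\mathrm{supp}(\mathbf m)$ and $1\le r<s\le\ell(\boldsymbol\lambda_i)$ (each vertex $i$ is replaced by a clique of size $\ell(\boldsymbol\lambda_i)$); (b) for each edge $\{i_1,\dots,i_k\}\in\mathcal E$ contained in $\mathrm{supp}(\mathbf m)$ and each choice $1\le r_j\le\ell(\boldsymbol\lambda_{i_j})$, the edge $\{(i_1,r_1),\dots,(i_k,r_k)\}$. *)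

theory Defs
  imports "HOL-Analysis.Analysis" "HOL-Library.Multiset"
begin

definition is_partition :: "nat list \<Rightarrow> nat \<Rightarrow> bool" where
  "is_partition lam k \<longleftrightarrow> sorted (rev lam) \<and> (\<forall>x\<in>set lam. 0 < x) \<and> sum_list lam = k"

definition supp_m :: "nat \<Rightarrow> (nat \<Rightarrow> nat) \<Rightarrow> nat set" where
  "supp_m n m = {i \<in> {1..n}. m i \<noteq> 0}"

definition marked_count :: "nat \<Rightarrow> nat set set \<Rightarrow> nat set \<Rightarrow> (nat \<Rightarrow> nat) \<Rightarrow> nat \<Rightarrow> nat" where
  "marked_count n E Vsp m q = card {\<Gamma> :: nat \<Rightarrow> nat multiset.
      (\<forall>v. v \<notin> {1..n} \<longrightarrow> \<Gamma> v = {#}) \<and>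
      (\<forall>v\<in>{1..n}. set_mset (\<Gamma> v) \<subseteq> {1..q} \<and> size (\<Gamma> v) = m v \<and>
                   (v \<notin> Vsp \<longrightarrow> (\<forall>x. count (\<Gamma> v) x \<le> 1))) \<and>
      (\<forall>e\<in>E. (\<Inter>v\<in>e. set_mset (\<Gamma> v)) = {})}"

definition hyp_chrom :: "'a set \<Rightarrow> 'a set set \<Rightarrow> nat \<Rightarrow> nat" where
  "hyp_chrom V Es q = card {c \<in> PiE V (\<lambda>_. {1..q}). \<forall>e\<in>Es. \<not> (\<exists>a. \<forall>x\<in>e. c x = a)}"

definition S_m :: "nat \<Rightarrow> nat set \<Rightarrow> (nat \<Rightarrow> nat) \<Rightarrow> (nat \<Rightarrow> nat list) set" where
  "S_m n Vsp m = {\<Lambda>. (\<forall>i. i \<notin> {1..n} \<longrightarrow> \<Lambda> i = []) \<and>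
      (\<forall>i\<in>{1..n}. is_partition (\<Lambda> i) (m i) \<and> (i \<notin> Vsp \<longrightarrow> \<Lambda> i = replicate (m i) 1))}"

definition G_verts :: "nat \<Rightarrow> (nat \<Rightarrow> nat) \<Rightarrow> (nat \<Rightarrow> nat list) \<Rightarrow> (nat \<times> nat) set" where
  "G_verts n m \<Lambda> = {(i, r). i \<in> supp_m n m \<and> 1 \<le> r \<and> r \<le> length (\<Lambda> i)}"

definition G_edges :: "nat \<Rightarrow> nat set set \<Rightarrow> (nat \<Rightarrow> nat) \<Rightarrow> (nat \<Rightarrow> nat list) \<Rightarrow> (nat \<times> nat) set set" where
  "G_edges n E m \<Lambda> =
     {{(i, r), (i, s)} | i r s. i \<in> supp_m n m \<and> 1 \<le> r \<and> r < s \<and> s \<le> length (\<Lambda> i)}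
   \<union> {(\<lambda>i. (i, \<rho> i)) ` e | e \<rho>. e \<in> E \<and> e \<subseteq> supp_m n m \<and>
        (\<forall>i\<in>e. 1 \<le> \<rho> i \<and> \<rho> i \<le> length (\<Lambda> i))}"

definition mult_fact :: "nat list \<Rightarrow> nat" where
  "mult_fact lam = (\<Prod>k\<in>set lam. fact (count_list lam k))"

end

theory Submission
  imports Defs "HOL-Combinatorics.Permutations" "HOL-Probability.Product_PMF"
begin

(* Listing the multiplicities of the colours in Gamma(i) as a partition gives every marked
   colouring Gamma a type in S(m).  Fix Lambda in S(m).  A colouring c of G(Lambda, m) induces
   the marking in which colour c(i, r) has multiplicity lambda_(i, r): the clique edges on the
   copies of i force the colours c(i, r) to be distinct, so this marking has type Lambda, and the
   transversal edges are exactly the condition that the colour sets along each edge have empty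
   intersection.  The colourings inducing a given marking of type Lambda are the
   multiplicity-preserving bijections between the parts of each lambda_i and the colours of
   Gamma(i); there are prod_i prod_k (d_k)! of them.  So the chromatic polynomial of G(Lambda, m)
   counts the markings of type Lambda, each prod_i prod_k (d_k)! times, and summing over S(m)
   gives the formula. *)

section \<open>Multisets with weighted labels\<close>

(* The r-th part, lam ! (r - 1), is the multiplicity of the label f r: parts are numbered from 1,
   like the vertices (i, r) of G(Lambda, m). *)
definition weighted_mset :: "nat list \<Rightarrow> (nat \<Rightarrow> 'a) \<Rightarrow> 'a multiset" where
  "weighted_mset lam f = (\<Sum>r\<in>{1..length lam}. replicate_mset (lam ! (r - 1)) (f r))"

definition multiplicities :: "'a multiset \<Rightarrow> nat multiset" where
  "multiplicities M = image_mset (count M) (mset_set (set_mset M))"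

definition partition_type :: "'a multiset \<Rightarrow> nat list" where
  "partition_type M = rev (sorted_list_of_multiset (multiplicities M))"

lemma weighted_mset_Nil [simp]: "weighted_mset [] f = {#}"
  by (simp add: weighted_mset_def)

lemma weighted_mset_cong:
  "(\<And>r. r \<in> {1..length lam} \<Longrightarrow> f r = g r) \<Longrightarrow> weighted_mset lam f = weighted_mset lam g"
  unfolding weighted_mset_def by (rule sum.cong) auto

lemma weighted_mset_restrict [simp]:
  "{1..length lam} \<subseteq> A \<Longrightarrow> weighted_mset lam (restrict f A) = weighted_mset lam f"
  by (rule weighted_mset_cong) auto

lemma weighted_mset_snoc:
  "weighted_mset (xs @ [k]) f = weighted_mset xs f + replicate_mset k (f (Suc (length xs)))"
proof -
  have "(\<Sum>r\<in>{1..length xs}. replicate_mset ((xs @ [k]) ! (r - 1)) (f r)) = weighted_mset xs f"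
    unfolding weighted_mset_def by (intro sum.cong refl) (auto simp: nth_append)
  then show ?thesis
    unfolding weighted_mset_def by (simp add: atLeastAtMostSuc_conv add.commute)
qed

lemma size_weighted_mset: "size (weighted_mset lam f) = sum_list lam"
  by (induction lam rule: rev_induct) (auto simp: weighted_mset_snoc)

lemma count_weighted_mset:
  "count (weighted_mset lam f) x = (\<Sum>r\<in>{1..length lam}. if f r = x then lam ! (r - 1) else 0)"
  unfolding weighted_mset_def count_sum by (intro sum.cong) auto

lemma count_weighted_mset_label:
  assumes "inj_on f {1..length lam}" "r \<in> {1..length lam}"
  shows "count (weighted_mset lam f) (f r) = lam ! (r - 1)"
proof -
  have "count (weighted_mset lam f) (f r) = (\<Sum>s\<in>{1..length lam}. if s = r then lam ! (r - 1) else 0)"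
    unfolding count_weighted_mset using assms by (intro sum.cong) (auto dest: inj_onD)
  then show ?thesis
    using assms(2) by simp
qed

lemma set_mset_weighted_mset:
  assumes "0 \<notin> set lam"
  shows "set_mset (weighted_mset lam f) = f ` {1..length lam}"
proof -
  have "lam ! (r - 1) \<noteq> 0" if "r \<in> {1..length lam}" for r
  proof -
    have "lam ! (r - 1) \<in> set lam"
      using that by (intro nth_mem) auto
    with assms show ?thesis
      by metis
  qed
  then show ?thesis
    unfolding weighted_mset_def set_mset_sum[OF finite_atLeastAtMost] by (auto split: if_splits)
qed

lemma multiplicities_weighted_mset:
  assumes "0 \<notin> set lam" "inj_on f {1..length lam}"
  shows "multiplicities (weighted_mset lam f) = mset lam"
proof -
  have "multiplicities (weighted_mset lam f)
      = image_mset (count (weighted_mset lam f) \<circ> f) (mset_set {1..length lam})"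
    unfolding multiplicities_def set_mset_weighted_mset[OF assms(1)]
      image_mset_mset_set[OF assms(2), symmetric] multiset.map_comp ..
  also have "\<dots> = image_mset (\<lambda>r. lam ! (r - 1)) (mset_set {1..length lam})"
    by (intro image_mset_cong) (simp add: count_weighted_mset_label[OF assms(2)])
  also have "\<dots> = image_mset (nth lam) (mset_set {0..<length lam})"
  proof -
    have "image_mset Suc (mset_set {0..<length lam}) = mset_set {1..length lam}"
      by (simp add: image_mset_mset_set image_Suc_atLeastLessThan atLeastLessThanSuc_atLeastAtMost)
    from this[symmetric] show ?thesis
      by (simp add: multiset.map_comp o_def)
  qed
  also have "\<dots> = mset (map (nth lam) [0..<length lam])"
    by (simp only: mset_map mset_upt)
  also have "\<dots> = mset lam"
    by (simp add: map_nth)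
  finally show ?thesis .
qed

lemma count_multiplicities:
  "count (multiplicities M) k = card {x \<in> set_mset M. count M x = k}"
  unfolding multiplicities_def by (simp add: count_image_mset_eq_card_vimage)

lemma sum_mset_multiplicities: "sum_mset (multiplicities M) = size M"
  unfolding multiplicities_def size_multiset_overloaded_eq by (rule sum_unfold_sum_mset[symmetric])

lemma multiplicities_diff_replicate:
  assumes "count M x = k" "0 < k"
  shows "multiplicities (M - replicate_mset k x) = multiplicities M - {#k#}"
proof -
  have x: "x \<in># M"
    using assms count_greater_zero_iff by metis
  have set_diff: "set_mset (M - replicate_mset k x) = set_mset M - {x}"
    using assms by (auto simp: in_diff_count split: if_splits)
  have "multiplicities (M - replicate_mset k x) = image_mset (count M) (mset_set (set_mset M - {x}))"
    unfolding multiplicities_def set_diff by (intro image_mset_cong) auto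
  also have "\<dots> = multiplicities M - {#k#}"
    unfolding multiplicities_def using x assms by (simp add: mset_set_Diff image_mset_Diff)
  finally show ?thesis .
qed

lemma mset_partition_type: "mset (partition_type M) = multiplicities M"
  by (simp add: partition_type_def)

lemma partition_type_empty [simp]: "partition_type {#} = []"
  by (simp add: partition_type_def multiplicities_def)

lemma is_partition_partition_type: "is_partition (partition_type M) (size M)"
proof -
  have "0 < k" if "k \<in># multiplicities M" for k
    using that by (auto simp: multiplicities_def)
  then show ?thesis
    unfolding is_partition_def
    by (simp add: partition_type_def sum_mset_multiplicities flip: sum_mset_sum_list)
qed

lemma partition_type_eq_iff:
  assumes "is_partition lam k"
  shows "partition_type M = lam \<longleftrightarrow> multiplicities M = mset lam"
proof
  assume "multiplicities M = mset lam"
  moreover have "sort lam = rev lam"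
    using assms by (intro properties_for_sort) (simp_all add: is_partition_def)
  ultimately show "partition_type M = lam"
    by (simp add: partition_type_def)
qed (auto simp flip: mset_partition_type)

lemma partition_type_eq_replicate:
  assumes "\<forall>x. count M x \<le> 1"
  shows "partition_type M = replicate (size M) 1"
proof -
  have "count M x = 1" if "x \<in># M" for x
    using assms[rule_format, of x] that by (simp flip: count_greater_zero_iff)
  then have "multiplicities M = image_mset (\<lambda>_. 1) (mset_set (set_mset M))"
    unfolding multiplicities_def by (intro image_mset_cong) simp
  also have "\<dots> = replicate_mset (size (multiplicities M)) 1"
    unfolding image_mset_const_eq by (simp add: multiplicities_def)
  finally have ones: "multiplicities M = replicate_mset (size (multiplicities M)) 1" .
  have "size M = sum_mset (multiplicities M)"
    by (simp add: sum_mset_multiplicities)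
  also have "\<dots> = size (multiplicities M)"
    by (subst (1) ones) simp
  finally have "size (multiplicities M) = size M" ..
  moreover have "is_partition (replicate (size M) 1) (size M)"
    by (simp add: is_partition_def sum_list_replicate)
  ultimately show ?thesis
    using ones by (simp add: partition_type_eq_iff)
qed

lemma count_le_1_if_partition_type_replicate:
  assumes "partition_type M = replicate k 1"
  shows "count M x \<le> 1"
proof (cases "x \<in># M")
  case True
  then have "count M x \<in># multiplicities M"
    by (simp add: multiplicities_def)
  also have "multiplicities M = replicate_mset k 1"
    using assms by (simp flip: mset_partition_type)
  finally show ?thesis
    by (simp split: if_splits)
qed (simp add: not_in_iff)

section \<open>Counting injective labellings\<close>

definition injective_labellings :: "nat list \<Rightarrow> 'a multiset \<Rightarrow> 'a set \<Rightarrow> (nat \<Rightarrow> 'a) set" where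
  "injective_labellings lam M Q =
     {f \<in> {1..length lam} \<rightarrow>\<^sub>E Q. inj_on f {1..length lam} \<and> weighted_mset lam f = M}"

lemma finite_injective_labellings: "finite Q \<Longrightarrow> finite (injective_labellings lam M Q)"
  unfolding injective_labellings_def
  by (rule finite_subset[OF _ finite_PiE[of "{1..length lam}" "\<lambda>_. Q"]]) auto

lemma mult_fact_pos: "0 < mult_fact lam"
  by (simp add: mult_fact_def prod_pos)

lemma mult_fact_snoc: "mult_fact (xs @ [k]) = (count_list xs k + 1) * mult_fact xs"
proof -
  let ?P = "\<lambda>ys. \<Prod>j\<in>set xs - {k}. fact (count_list ys j)"
  have "mult_fact xs = (\<Prod>j\<in>insert k (set xs). fact (count_list xs j))"
    unfolding mult_fact_def by (cases "k \<in> set xs") (simp_all add: insert_absorb count_list_0_iff)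
  also have "\<dots> = fact (count_list xs k) * ?P xs"
    by (simp add: prod.insert_remove)
  finally have xs: "mult_fact xs = fact (count_list xs k) * ?P xs" .
  have "mult_fact (xs @ [k]) = fact (count_list xs k + 1) * ?P (xs @ [k])"
    unfolding mult_fact_def by (simp add: prod.insert_remove)
  also have "?P (xs @ [k]) = ?P xs"
    by (intro prod.cong) auto
  finally show ?thesis
    using xs by (simp add: algebra_simps)
qed

lemma add_replicate_mset_eq_iff:
  "N + replicate_mset k x = M \<and> x \<notin># N \<longleftrightarrow> count M x = k \<and> N = M - replicate_mset k x"
  by (auto simp: multiset_eq_iff simp flip: count_greater_zero_iff)

lemma inj_on_fun_upd_insert:
  "a \<notin> S \<Longrightarrow> inj_on (g(a := x)) (insert a S) \<longleftrightarrow> inj_on g S \<and> x \<notin> g ` S"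
proof -
  assume "a \<notin> S"
  then have "inj_on (g(a := x)) S \<longleftrightarrow> inj_on g S" "(g(a := x)) ` (S - {a}) = g ` S"
    by (auto intro!: inj_on_cong)
  then show ?thesis
    unfolding inj_on_insert by simp
qed

lemma weighted_mset_snoc_fun_upd:
  "weighted_mset (xs @ [k]) (g(Suc (length xs) := x)) = weighted_mset xs g + replicate_mset k x"
proof -
  have "weighted_mset xs (g(Suc (length xs) := x)) = weighted_mset xs g"
    by (intro weighted_mset_cong) auto
  then show ?thesis
    by (simp add: weighted_mset_snoc)
qed

(* The last part, of size k, must be labelled by a colour of multiplicity exactly k. *)
lemma injective_labellings_snoc:
  assumes "0 < k" "0 \<notin> set xs" "set_mset M \<subseteq> Q"
  defines "a \<equiv> Suc (length xs)"
  shows "injective_labellings (xs @ [k]) M Q =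
    (\<lambda>(x, g). g(a := x)) `
      (SIGMA x:{x \<in> set_mset M. count M x = k}. injective_labellings xs (M - replicate_mset k x) Q)"
proof -
  let ?S = "{1..length xs}"
  have S: "{1..length (xs @ [k])} = insert a ?S" "a \<notin> ?S"
    by (auto simp: a_def)
  have "injective_labellings (xs @ [k]) M Q = (\<lambda>(x, g). g(a := x)) `
      {(x, g) \<in> Q \<times> (?S \<rightarrow>\<^sub>E Q). inj_on g ?S \<and> x \<notin> g ` ?S \<and>
         weighted_mset xs g + replicate_mset k x = M}"
    unfolding injective_labellings_def S(1) PiE_insert_eq Compr_image_eq
    by (intro arg_cong[where f = "image _"] Collect_cong)
      (simp only: prod.case_eq_if prod.collapse inj_on_fun_upd_insert[OF S(2)]
        weighted_mset_snoc_fun_upd[of xs k, folded a_def] conj_assoc)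
  also have "{(x, g) \<in> Q \<times> (?S \<rightarrow>\<^sub>E Q). inj_on g ?S \<and> x \<notin> g ` ?S \<and>
      weighted_mset xs g + replicate_mset k x = M} =
      (SIGMA x:{x \<in> set_mset M. count M x = k}. injective_labellings xs (M - replicate_mset k x) Q)"
  proof -
    have "x \<in> Q \<and> x \<notin> g ` ?S \<and> weighted_mset xs g + replicate_mset k x = M \<longleftrightarrow>
        x \<in> set_mset M \<and> count M x = k \<and> weighted_mset xs g = M - replicate_mset k x" for x g
      using add_replicate_mset_eq_iff[of "weighted_mset xs g" k x M] assms(1,3)
      by (auto simp: set_mset_weighted_mset[OF assms(2)] simp flip: count_greater_zero_iff)
    then show ?thesis
      unfolding injective_labellings_def by auto
  qed
  finally show ?thesis .
qed

lemma card_injective_labellings: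
  assumes "finite Q" "0 \<notin> set lam" "set_mset M \<subseteq> Q" "multiplicities M = mset lam"
  shows "card (injective_labellings lam M Q) = mult_fact lam"
  using assms(2-4)
proof (induction lam arbitrary: M rule: rev_induct)
  case Nil
  then have "M = {#}"
    by (simp add: multiplicities_def mset_set_empty_iff)
  then have "injective_labellings [] M Q = {\<lambda>_. undefined}"
    by (auto simp: injective_labellings_def)
  then show ?case
    by (simp add: mult_fact_def)
next
  case (snoc k xs)
  let ?X = "{x \<in> set_mset M. count M x = k}"
  let ?T = "\<lambda>x. injective_labellings xs (M - replicate_mset k x) Q"
  have k: "0 < k" and xs: "0 \<notin> set xs"
    using snoc.prems(1) by auto
  have card_T: "card (?T x) = mult_fact xs" if "x \<in> ?X" for x
  proof (rule snoc.IH[OF xs])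
    show "set_mset (M - replicate_mset k x) \<subseteq> Q"
      using snoc.prems(2) by (meson in_diffD subset_iff)
    show "multiplicities (M - replicate_mset k x) = mset xs"
      using that k snoc.prems(3) by (simp add: multiplicities_diff_replicate)
  qed
  have "inj_on (\<lambda>(x, g). g(Suc (length xs) := x)) (Sigma ?X ?T)"
  proof (rule inj_on_subset[OF inj_combinator[where T = "\<lambda>_. Q"]])
    show "Sigma ?X ?T \<subseteq> Q \<times> ({1..length xs} \<rightarrow>\<^sub>E Q)"
      using snoc.prems(2) by (auto simp: injective_labellings_def)
  qed simp
  then have "card (injective_labellings (xs @ [k]) M Q) = card (Sigma ?X ?T)"
    unfolding injective_labellings_snoc[OF k xs snoc.prems(2)] by (rule card_image)
  also have "\<dots> = (\<Sum>x\<in>?X. card (?T x))"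
    using assms(1) by (simp add: finite_injective_labellings)
  also have "\<dots> = card ?X * mult_fact xs"
    by (simp add: card_T)
  also have "card ?X = count_list xs k + 1"
    using snoc.prems(3) count_multiplicities[of M k] by (simp add: count_mset)
  finally show ?case
    by (simp add: mult_fact_snoc)
qed

lemma bij_betw_PiE_Sigma_sections:
  assumes "\<And>i. i \<in> I \<Longrightarrow> T i \<subseteq> J i \<rightarrow>\<^sub>E B"
  shows "bij_betw (\<lambda>c. \<lambda>i\<in>I. \<lambda>r\<in>J i. c (i, r))
    {c \<in> Sigma I J \<rightarrow>\<^sub>E B. \<forall>i\<in>I. (\<lambda>r\<in>J i. c (i, r)) \<in> T i} (Pi\<^sub>E I T)"
  (is "bij_betw _ ?C _")
proof (rule bij_betw_byWitness[where f' = "\<lambda>\<phi>. \<lambda>p\<in>Sigma I J. \<phi> (fst p) (snd p)"])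
  show "\<forall>c\<in>?C. (\<lambda>p\<in>Sigma I J. (\<lambda>i\<in>I. \<lambda>r\<in>J i. c (i, r)) (fst p) (snd p)) = c"
  proof (intro ballI ext)
    fix c p assume "c \<in> ?C"
    then show "(\<lambda>p\<in>Sigma I J. (\<lambda>i\<in>I. \<lambda>r\<in>J i. c (i, r)) (fst p) (snd p)) p = c p"
      by (cases "p \<in> Sigma I J") (auto simp: PiE_arb[of c])
  qed
  show "\<forall>\<phi>\<in>Pi\<^sub>E I T. (\<lambda>i\<in>I. \<lambda>r\<in>J i. (\<lambda>p\<in>Sigma I J. \<phi> (fst p) (snd p)) (i, r)) = \<phi>"
  proof (intro ballI, rule ext)
    fix \<phi> i assume \<phi>: "\<phi> \<in> Pi\<^sub>E I T"
    show "(\<lambda>i\<in>I. \<lambda>r\<in>J i. (\<lambda>p\<in>Sigma I J. \<phi> (fst p) (snd p)) (i, r)) i = \<phi> i"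
    proof (cases "i \<in> I")
      case True
      then have "\<phi> i \<in> J i \<rightarrow>\<^sub>E B"
        using \<phi> assms by blast
      then show ?thesis
        using True by (simp add: PiE_restrict cong: restrict_cong)
    next
      case False
      then show ?thesis
        by (simp add: PiE_arb[OF \<phi>])
    qed
  qed
  show "(\<lambda>c. \<lambda>i\<in>I. \<lambda>r\<in>J i. c (i, r)) ` ?C \<subseteq> Pi\<^sub>E I T"
    by (auto simp: restrict_PiE_iff)
  show "(\<lambda>\<phi>. \<lambda>p\<in>Sigma I J. \<phi> (fst p) (snd p)) ` Pi\<^sub>E I T \<subseteq> ?C"
  proof (intro image_subsetI CollectI conjI ballI)
    fix \<phi> assume \<phi>: "\<phi> \<in> Pi\<^sub>E I T"
    then have slice: "\<phi> i \<in> J i \<rightarrow>\<^sub>E B" if "i \<in> I" for i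
      using assms that by blast
    then show "(\<lambda>p\<in>Sigma I J. \<phi> (fst p) (snd p)) \<in> Sigma I J \<rightarrow>\<^sub>E B"
      by (auto simp: restrict_PiE_iff intro: PiE_mem[OF slice])
    fix i assume i: "i \<in> I"
    have "(\<lambda>r\<in>J i. (\<lambda>p\<in>Sigma I J. \<phi> (fst p) (snd p)) (i, r)) = restrict (\<phi> i) (J i)"
      using i by (intro restrict_cong) auto
    also have "\<dots> = \<phi> i"
      using slice[OF i] by (rule PiE_restrict)
    finally show "(\<lambda>r\<in>J i. (\<lambda>p\<in>Sigma I J. \<phi> (fst p) (snd p)) (i, r)) \<in> T i"
      using PiE_mem[OF \<phi> i] by simp
  qed
qed

lemma card_PiE_Sigma_sections:
  assumes "finite I" "\<And>i. i \<in> I \<Longrightarrow> T i \<subseteq> J i \<rightarrow>\<^sub>E B"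
  shows "card {c \<in> Sigma I J \<rightarrow>\<^sub>E B. \<forall>i\<in>I. (\<lambda>r\<in>J i. c (i, r)) \<in> T i} = (\<Prod>i\<in>I. card (T i))"
proof -
  have "card {c \<in> Sigma I J \<rightarrow>\<^sub>E B. \<forall>i\<in>I. (\<lambda>r\<in>J i. c (i, r)) \<in> T i} = card (Pi\<^sub>E I T)"
    using bij_betw_PiE_Sigma_sections[OF assms(2)] by (rule bij_betw_same_card)
  also have "\<dots> = (\<Prod>i\<in>I. card (T i))"
    using assms(1) by (rule card_PiE)
  finally show ?thesis .
qed

lemma INT_image_eq_empty_iff:
  "(\<Inter>i\<in>e. f i ` J i) = {} \<longleftrightarrow> (\<forall>\<rho>\<in>Pi e J. \<not> (\<exists>a. \<forall>i\<in>e. f i (\<rho> i) = a))"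
proof -
  have "a \<in> (\<Inter>i\<in>e. f i ` J i) \<longleftrightarrow> (\<exists>\<rho>\<in>Pi e J. \<forall>i\<in>e. f i (\<rho> i) = a)" for a
  proof -
    have "a \<in> (\<Inter>i\<in>e. f i ` J i) \<longleftrightarrow> (\<forall>i\<in>e. \<exists>r. r \<in> J i \<and> f i r = a)"
      by auto
    also have "\<dots> \<longleftrightarrow> (\<exists>\<rho>\<in>Pi e J. \<forall>i\<in>e. f i (\<rho> i) = a)"
      unfolding bchoice_iff Pi_iff by blast
    finally show ?thesis .
  qed
  then show ?thesis
    unfolding all_not_in_conv[symmetric] by (simp only:) blast
qed

lemma inj_on_iff_less:
  "inj_on f (A :: 'a :: linorder set) \<longleftrightarrow> (\<forall>r\<in>A. \<forall>s\<in>A. r < s \<longrightarrow> f r \<noteq> f s)"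
  by (auto dest: inj_onD intro: linorder_inj_onI')

definition proper_colourings :: "'a set \<Rightarrow> 'a set set \<Rightarrow> nat \<Rightarrow> ('a \<Rightarrow> nat) set" where
  "proper_colourings V Es q = {c \<in> V \<rightarrow>\<^sub>E {1..q}. \<forall>e\<in>Es. \<not> (\<exists>a. \<forall>x\<in>e. c x = a)}"

lemma hyp_chrom_eq_card: "hyp_chrom V Es q = card (proper_colourings V Es q)"
  unfolding hyp_chrom_def proper_colourings_def ..

lemma finite_proper_colourings: "finite V \<Longrightarrow> finite (proper_colourings V Es q)"
  unfolding proper_colourings_def
  by (rule finite_subset[OF _ finite_PiE[of V "\<lambda>_. {1..q}"]]) auto

lemma finite_supp_m: "finite (supp_m n m)"
  by (simp add: supp_m_def)

lemma G_verts_eq_Sigma: "G_verts n m \<Lambda> = Sigma (supp_m n m) (\<lambda>i. {1..length (\<Lambda> i)})"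
  unfolding G_verts_def by auto

lemma no_monochromatic_clique_edges_iff:
  "(\<forall>e\<in>{{(i, r), (i, s)} | i r s. i \<in> I \<and> 1 \<le> r \<and> r < s \<and> s \<le> length (\<Lambda> i)}.
      \<not> (\<exists>a. \<forall>x\<in>e. c x = a)) \<longleftrightarrow>
   (\<forall>i\<in>I. inj_on (\<lambda>r. c (i, r)) {1..length (\<Lambda> i)})"
  (is "(\<forall>e\<in>?cliques. _) \<longleftrightarrow> _")
  unfolding inj_on_iff_less
proof (intro iffI ballI impI notI)
  fix i r s
  assume no_mono: "\<forall>e\<in>?cliques. \<not> (\<exists>a. \<forall>x\<in>e. c x = a)"
    and "i \<in> I" "r \<in> {1..length (\<Lambda> i)}" "s \<in> {1..length (\<Lambda> i)}" "r < s" "c (i, r) = c (i, s)"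
  then have "{(i, r), (i, s)} \<in> ?cliques" "\<forall>x\<in>{(i, r), (i, s)}. c x = c (i, r)"
    by auto
  with no_mono show False
    by blast
next
  fix e
  assume "\<forall>i\<in>I. \<forall>r\<in>{1..length (\<Lambda> i)}. \<forall>s\<in>{1..length (\<Lambda> i)}. r < s \<longrightarrow> c (i, r) \<noteq> c (i, s)"
    and "e \<in> ?cliques" "\<exists>a. \<forall>x\<in>e. c x = a"
  then show False
    by fastforce
qed

lemma no_monochromatic_transversal_edges_iff:
  "(\<forall>e'\<in>{(\<lambda>i. (i, \<rho> i)) ` e | e \<rho>. e \<in> E \<and> e \<subseteq> I \<and> (\<forall>i\<in>e. 1 \<le> \<rho> i \<and> \<rho> i \<le> length (\<Lambda> i))}.
      \<not> (\<exists>a. \<forall>x\<in>e'. c x = a)) \<longleftrightarrow>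
   (\<forall>e\<in>E. e \<subseteq> I \<longrightarrow> (\<Inter>i\<in>e. (\<lambda>r. c (i, r)) ` {1..length (\<Lambda> i)}) = {})"
  (is "(\<forall>e'\<in>?transversals. _) \<longleftrightarrow> _")
  unfolding INT_image_eq_empty_iff
proof (intro iffI ballI impI notI)
  fix e \<rho>
  assume no_mono: "\<forall>e'\<in>?transversals. \<not> (\<exists>a. \<forall>x\<in>e'. c x = a)"
    and e: "e \<in> E" "e \<subseteq> I" and \<rho>: "\<rho> \<in> Pi e (\<lambda>i. {1..length (\<Lambda> i)})"
    and mono: "\<exists>a. \<forall>i\<in>e. c (i, \<rho> i) = a"
  have "\<forall>i\<in>e. 1 \<le> \<rho> i \<and> \<rho> i \<le> length (\<Lambda> i)"
    using \<rho> by (simp add: Pi_iff)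
  then have "(\<lambda>i. (i, \<rho> i)) ` e \<in> ?transversals"
    using e unfolding mem_Collect_eq by (intro exI[of _ e] exI[of _ \<rho>]) simp
  with no_mono have "\<not> (\<exists>a. \<forall>x\<in>(\<lambda>i. (i, \<rho> i)) ` e. c x = a)"
    by (rule bspec)
  moreover have "\<exists>a. \<forall>x\<in>(\<lambda>i. (i, \<rho> i)) ` e. c x = a"
    using mono by auto
  ultimately show False
    by contradiction
next
  fix e'
  assume no_mono: "\<forall>e\<in>E. e \<subseteq> I \<longrightarrow> (\<forall>\<rho>\<in>Pi e (\<lambda>i. {1..length (\<Lambda> i)}). \<not> (\<exists>a. \<forall>i\<in>e. c (i, \<rho> i) = a))"
    and "e' \<in> ?transversals" and mono: "\<exists>a. \<forall>x\<in>e'. c x = a"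
  then obtain e \<rho> where e': "e' = (\<lambda>i. (i, \<rho> i)) ` e" and e: "e \<in> E" "e \<subseteq> I"
    and bounds: "\<forall>i\<in>e. 1 \<le> \<rho> i \<and> \<rho> i \<le> length (\<Lambda> i)"
    by blast
  have "\<rho> \<in> Pi e (\<lambda>i. {1..length (\<Lambda> i)})"
    using bounds by (simp add: Pi_iff)
  with no_mono e have "\<not> (\<exists>a. \<forall>i\<in>e. c (i, \<rho> i) = a)"
    by simp
  moreover have "\<exists>a. \<forall>i\<in>e. c (i, \<rho> i) = a"
    using mono unfolding e' by auto
  ultimately show False
    by contradiction
qed

lemma proper_colourings_G_iff:
  "c \<in> proper_colourings (G_verts n m \<Lambda>) (G_edges n E m \<Lambda>) q \<longleftrightarrow>
     c \<in> Sigma (supp_m n m) (\<lambda>i. {1..length (\<Lambda> i)}) \<rightarrow>\<^sub>E {1..q} \<and>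
     (\<forall>i\<in>supp_m n m. inj_on (\<lambda>r. c (i, r)) {1..length (\<Lambda> i)}) \<and>
     (\<forall>e\<in>E. e \<subseteq> supp_m n m \<longrightarrow> (\<Inter>i\<in>e. (\<lambda>r. c (i, r)) ` {1..length (\<Lambda> i)}) = {})"
  unfolding proper_colourings_def G_verts_eq_Sigma G_edges_def mem_Collect_eq ball_Un
    no_monochromatic_clique_edges_iff no_monochromatic_transversal_edges_iff ..

section \<open>Marked colourings and their partition types\<close>

definition marked_colourings ::
    "nat \<Rightarrow> nat set set \<Rightarrow> nat set \<Rightarrow> (nat \<Rightarrow> nat) \<Rightarrow> nat \<Rightarrow> (nat \<Rightarrow> nat multiset) set" where
  "marked_colourings n E Vsp m q = {\<Gamma>.
      (\<forall>v. v \<notin> {1..n} \<longrightarrow> \<Gamma> v = {#}) \<and>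
      (\<forall>v\<in>{1..n}. set_mset (\<Gamma> v) \<subseteq> {1..q} \<and> size (\<Gamma> v) = m v \<and>
                   (v \<notin> Vsp \<longrightarrow> (\<forall>x. count (\<Gamma> v) x \<le> 1))) \<and>
      (\<forall>e\<in>E. (\<Inter>v\<in>e. set_mset (\<Gamma> v)) = {})}"

lemma marked_count_eq_card: "marked_count n E Vsp m q = card (marked_colourings n E Vsp m q)"
  unfolding marked_count_def marked_colourings_def ..

lemma finite_marked_colourings: "finite (marked_colourings n E Vsp m q)"
proof (rule finite_subset)
  show "marked_colourings n E Vsp m q \<subseteq> PiE_dflt {1..n} {#} (\<lambda>v. multisets_of_size {1..q} (m v))"
    by (auto simp: marked_colourings_def PiE_dflt_def multisets_of_size_def)
qed (auto simp: finite_multisets_of_size)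

lemma marked_colouring_disjoint:
  "\<Gamma> \<in> marked_colourings n E Vsp m q \<Longrightarrow> e \<in> E \<Longrightarrow> (\<Inter>v\<in>e. set_mset (\<Gamma> v)) = {}"
  by (simp add: marked_colourings_def)

lemma marked_colouring_outside_supp:
  assumes "\<Gamma> \<in> marked_colourings n E Vsp m q" "i \<notin> supp_m n m"
  shows "\<Gamma> i = {#}"
proof (cases "i \<in> {1..n}")
  case True
  then have "size (\<Gamma> i) = m i" "m i = 0"
    using assms by (auto simp: marked_colourings_def supp_m_def)
  then show ?thesis
    by simp
qed (use assms in \<open>simp add: marked_colourings_def\<close>)

lemma S_m_partition:
  "\<Lambda> \<in> S_m n Vsp m \<Longrightarrow> i \<in> supp_m n m \<Longrightarrow> is_partition (\<Lambda> i) (m i)"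
  by (auto simp: S_m_def supp_m_def)

lemma S_m_outside_supp:
  assumes "\<Lambda> \<in> S_m n Vsp m" "i \<notin> supp_m n m"
  shows "\<Lambda> i = []"
proof (cases "i \<in> {1..n}")
  case True
  have "is_partition (\<Lambda> i) (m i)"
    using assms(1) True by (simp add: S_m_def)
  moreover have "m i = 0"
    using assms(2) True by (simp add: supp_m_def)
  ultimately have "is_partition (\<Lambda> i) 0"
    by simp
  then show ?thesis
    by (cases "\<Lambda> i") (auto simp: is_partition_def)
qed (use assms in \<open>simp add: S_m_def\<close>)

lemma S_m_parts_nonzero:
  assumes "\<Lambda> \<in> S_m n Vsp m"
  shows "0 \<notin> set (\<Lambda> i)"
proof (cases "i \<in> supp_m n m")
  case True
  then show ?thesis
    using S_m_partition[OF assms True] by (auto simp: is_partition_def)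
qed (simp add: S_m_outside_supp[OF assms])

lemma length_le_sum_list: "0 \<notin> set xs \<Longrightarrow> length xs \<le> sum_list (xs :: nat list)"
  by (induction xs) auto

lemma finite_S_m: "finite (S_m n Vsp m)"
proof (rule finite_subset)
  show "S_m n Vsp m \<subseteq> PiE_dflt {1..n} [] (\<lambda>i. {xs. set xs \<subseteq> {0..m i} \<and> length xs \<le> m i})"
  proof
    fix \<Lambda> assume \<Lambda>: "\<Lambda> \<in> S_m n Vsp m"
    have "set (\<Lambda> i) \<subseteq> {0..m i} \<and> length (\<Lambda> i) \<le> m i" if "i \<in> {1..n}" for i
    proof -
      have "is_partition (\<Lambda> i) (m i)"
        using \<Lambda> that by (simp add: S_m_def)
      then show ?thesis
        unfolding is_partition_def using member_le_sum_list[of _ "\<Lambda> i"] length_le_sum_list[of "\<Lambda> i"]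
        by fastforce
    qed
    then show "\<Lambda> \<in> PiE_dflt {1..n} [] (\<lambda>i. {xs. set xs \<subseteq> {0..m i} \<and> length xs \<le> m i})"
      using \<Lambda> by (auto simp: PiE_dflt_def S_m_def)
  qed
qed (auto intro: finite_lists_length_le)

lemma partition_type_comp_in_S_m:
  assumes "\<Gamma> \<in> marked_colourings n E Vsp m q"
  shows "partition_type \<circ> \<Gamma> \<in> S_m n Vsp m"
proof -
  have "is_partition (partition_type (\<Gamma> i)) (m i) \<and>
      (i \<notin> Vsp \<longrightarrow> partition_type (\<Gamma> i) = replicate (m i) 1)" if "i \<in> {1..n}" for i
  proof -
    have "size (\<Gamma> i) = m i" "i \<notin> Vsp \<Longrightarrow> \<forall>x. count (\<Gamma> i) x \<le> 1"
      using assms that by (auto simp: marked_colourings_def)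
    then show ?thesis
      using is_partition_partition_type[of "\<Gamma> i"] partition_type_eq_replicate[of "\<Gamma> i"] by auto
  qed
  moreover have "\<forall>i. i \<notin> {1..n} \<longrightarrow> partition_type (\<Gamma> i) = []"
    using assms by (simp add: marked_colourings_def)
  ultimately show ?thesis
    by (simp add: S_m_def)
qed

section \<open>The marking induced by a colouring of G(Lambda, m)\<close>

definition induced_marking ::
    "nat \<Rightarrow> (nat \<Rightarrow> nat) \<Rightarrow> (nat \<Rightarrow> nat list) \<Rightarrow> (nat \<times> nat \<Rightarrow> 'a) \<Rightarrow> nat \<Rightarrow> 'a multiset" where
  "induced_marking n m \<Lambda> c i =
     (if i \<in> supp_m n m then weighted_mset (\<Lambda> i) (\<lambda>r. c (i, r)) else {#})"

lemma partition_type_induced_marking: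
  assumes "\<Lambda> \<in> S_m n Vsp m" "\<forall>i\<in>supp_m n m. inj_on (\<lambda>r. c (i, r)) {1..length (\<Lambda> i)}"
  shows "partition_type \<circ> induced_marking n m \<Lambda> c = \<Lambda>"
proof
  fix i show "(partition_type \<circ> induced_marking n m \<Lambda> c) i = \<Lambda> i"
  proof (cases "i \<in> supp_m n m")
    case True
    then show ?thesis
      using S_m_partition[OF assms(1) True] S_m_parts_nonzero[OF assms(1)] assms(2)
      by (simp add: induced_marking_def partition_type_eq_iff multiplicities_weighted_mset)
  qed (simp add: induced_marking_def S_m_outside_supp[OF assms(1)])
qed

lemma set_mset_induced_marking:
  "\<Lambda> \<in> S_m n Vsp m \<Longrightarrow> i \<in> supp_m n m \<Longrightarrow>
    set_mset (induced_marking n m \<Lambda> c i) = (\<lambda>r. c (i, r)) ` {1..length (\<Lambda> i)}"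
  using S_m_parts_nonzero by (simp add: induced_marking_def set_mset_weighted_mset)

lemma size_induced_marking:
  assumes "\<Lambda> \<in> S_m n Vsp m" "i \<in> {1..n}"
  shows "size (induced_marking n m \<Lambda> c i) = m i"
proof (cases "i \<in> supp_m n m")
  case True
  then show ?thesis
    using S_m_partition[OF assms(1) True]
    by (simp add: induced_marking_def size_weighted_mset is_partition_def)
qed (use assms(2) in \<open>simp add: induced_marking_def supp_m_def\<close>)

lemma induced_marking_in_marked_colourings:
  assumes \<Lambda>: "\<Lambda> \<in> S_m n Vsp m"
    and c: "c \<in> proper_colourings (G_verts n m \<Lambda>) (G_edges n E m \<Lambda>) q"
  shows "induced_marking n m \<Lambda> c \<in> marked_colourings n E Vsp m q"
proof -
  let ?\<Gamma> = "induced_marking n m \<Lambda> c" and ?J = "\<lambda>i. {1..length (\<Lambda> i)}"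
  have c_vals: "c \<in> Sigma (supp_m n m) ?J \<rightarrow>\<^sub>E {1..q}"
    and inj: "\<forall>i\<in>supp_m n m. inj_on (\<lambda>r. c (i, r)) (?J i)"
    and disj: "\<forall>e\<in>E. e \<subseteq> supp_m n m \<longrightarrow> (\<Inter>i\<in>e. (\<lambda>r. c (i, r)) ` ?J i) = {}"
    using c unfolding proper_colourings_G_iff by blast+
  have outside: "?\<Gamma> i = {#}" if "i \<notin> supp_m n m" for i
    using that by (simp add: induced_marking_def)
  have colours: "set_mset (?\<Gamma> v) \<subseteq> {1..q}" for v
  proof (cases "v \<in> supp_m n m")
    case True
    then have "c (v, r) \<in> {1..q}" if "r \<in> ?J v" for r
      using that by (intro PiE_mem[OF c_vals]) simp
    then show ?thesis
      unfolding set_mset_induced_marking[OF \<Lambda> True] by blast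
  qed (simp add: outside)
  have simple: "count (?\<Gamma> v) x \<le> 1" if "v \<in> {1..n}" "v \<notin> Vsp" for v x
  proof (rule count_le_1_if_partition_type_replicate)
    show "partition_type (?\<Gamma> v) = replicate (m v) 1"
      using partition_type_induced_marking[OF \<Lambda> inj, THEN fun_cong, of v] \<Lambda> that
      by (simp add: S_m_def)
  qed
  have "(\<Inter>v\<in>e. set_mset (?\<Gamma> v)) = {}" if "e \<in> E" for e
  proof (cases "e \<subseteq> supp_m n m")
    case True
    then have "(\<Inter>v\<in>e. set_mset (?\<Gamma> v)) = (\<Inter>v\<in>e. (\<lambda>r. c (v, r)) ` ?J v)"
      using set_mset_induced_marking[OF \<Lambda>, where c = c] by (intro INF_cong[OF refl]) blast
    then show ?thesis
      using disj that True by simp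
  next
    case False
    then obtain v where v: "v \<in> e" "v \<notin> supp_m n m"
      by blast
    then have "(\<Inter>v\<in>e. set_mset (?\<Gamma> v)) \<subseteq> set_mset (?\<Gamma> v)"
      by (intro INT_lower)
    then show ?thesis
      using outside[OF v(2)] by simp
  qed
  moreover have "\<forall>v. v \<notin> {1..n} \<longrightarrow> ?\<Gamma> v = {#}"
    by (simp add: induced_marking_def supp_m_def)
  ultimately show ?thesis
    using colours size_induced_marking[OF \<Lambda>, where c = c] simple
    unfolding marked_colourings_def by blast
qed

(* Outside supp(m) both sides vanish, and the disjointness required by the transversal edges
   is inherited from the marked colouring, so only the sections c(i, -) are constrained. *)
lemma induced_marking_fibre_eq:
  assumes \<Lambda>: "\<Lambda> \<in> S_m n Vsp m" and \<Gamma>: "\<Gamma> \<in> marked_colourings n E Vsp m q"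
  defines "J \<equiv> \<lambda>i. {1..length (\<Lambda> i)}"
  shows "{c \<in> proper_colourings (G_verts n m \<Lambda>) (G_edges n E m \<Lambda>) q. induced_marking n m \<Lambda> c = \<Gamma>} =
    {c \<in> Sigma (supp_m n m) J \<rightarrow>\<^sub>E {1..q}.
       \<forall>i\<in>supp_m n m. (\<lambda>r\<in>J i. c (i, r)) \<in> injective_labellings (\<Lambda> i) (\<Gamma> i) {1..q}}"
proof (intro set_eqI)
  fix c
  have marking_eq: "induced_marking n m \<Lambda> c = \<Gamma> \<longleftrightarrow>
      (\<forall>i\<in>supp_m n m. weighted_mset (\<Lambda> i) (\<lambda>r. c (i, r)) = \<Gamma> i)"
    using marked_colouring_outside_supp[OF \<Gamma>] by (auto simp: induced_marking_def fun_eq_iff)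
  have disjoint: "\<forall>e\<in>E. e \<subseteq> supp_m n m \<longrightarrow> (\<Inter>i\<in>e. (\<lambda>r. c (i, r)) ` J i) = {}"
    if weights: "\<forall>i\<in>supp_m n m. weighted_mset (\<Lambda> i) (\<lambda>r. c (i, r)) = \<Gamma> i"
  proof (intro ballI impI)
    fix e assume e: "e \<in> E" "e \<subseteq> supp_m n m"
    have "(\<lambda>r. c (i, r)) ` J i = set_mset (\<Gamma> i)" if "i \<in> supp_m n m" for i
      unfolding weights[rule_format, OF that, symmetric] J_def
      by (simp add: set_mset_weighted_mset[OF S_m_parts_nonzero[OF \<Lambda>]])
    then have "(\<Inter>i\<in>e. (\<lambda>r. c (i, r)) ` J i) = (\<Inter>i\<in>e. set_mset (\<Gamma> i))"
      using e(2) by (intro INF_cong[OF refl]) blast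
    also have "\<dots> = {}"
      using \<Gamma> e(1) by (rule marked_colouring_disjoint)
    finally show "(\<Inter>i\<in>e. (\<lambda>r. c (i, r)) ` J i) = {}" .
  qed
  have sections: "(\<forall>i\<in>supp_m n m. (\<lambda>r\<in>J i. c (i, r)) \<in> injective_labellings (\<Lambda> i) (\<Gamma> i) {1..q}) \<longleftrightarrow>
      (\<forall>i\<in>supp_m n m. inj_on (\<lambda>r. c (i, r)) (J i) \<and> weighted_mset (\<Lambda> i) (\<lambda>r. c (i, r)) = \<Gamma> i)"
    if "c \<in> Sigma (supp_m n m) J \<rightarrow>\<^sub>E {1..q}"
    using that by (auto simp: injective_labellings_def J_def restrict_PiE_iff intro: PiE_mem[OF that])
  show "c \<in> {c \<in> proper_colourings (G_verts n m \<Lambda>) (G_edges n E m \<Lambda>) q. induced_marking n m \<Lambda> c = \<Gamma>} \<longleftrightarrow>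
    c \<in> {c \<in> Sigma (supp_m n m) J \<rightarrow>\<^sub>E {1..q}.
       \<forall>i\<in>supp_m n m. (\<lambda>r\<in>J i. c (i, r)) \<in> injective_labellings (\<Lambda> i) (\<Gamma> i) {1..q}}"
    unfolding mem_Collect_eq proper_colourings_G_iff marking_eq
    using disjoint sections by (auto simp: J_def)
qed

lemma card_induced_marking_fibre:
  assumes \<Lambda>: "\<Lambda> \<in> S_m n Vsp m" and \<Gamma>: "\<Gamma> \<in> marked_colourings n E Vsp m q"
    and type: "partition_type \<circ> \<Gamma> = \<Lambda>"
  shows "card {c \<in> proper_colourings (G_verts n m \<Lambda>) (G_edges n E m \<Lambda>) q. induced_marking n m \<Lambda> c = \<Gamma>}
    = (\<Prod>i\<in>supp_m n m. mult_fact (\<Lambda> i))"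
proof -
  have "card {c \<in> proper_colourings (G_verts n m \<Lambda>) (G_edges n E m \<Lambda>) q. induced_marking n m \<Lambda> c = \<Gamma>}
      = (\<Prod>i\<in>supp_m n m. card (injective_labellings (\<Lambda> i) (\<Gamma> i) {1..q}))"
    unfolding induced_marking_fibre_eq[OF \<Lambda> \<Gamma>]
    by (rule card_PiE_Sigma_sections) (auto simp: finite_supp_m injective_labellings_def)
  also have "\<dots> = (\<Prod>i\<in>supp_m n m. mult_fact (\<Lambda> i))"
  proof (intro prod.cong refl card_injective_labellings)
    fix i assume i: "i \<in> supp_m n m"
    show "0 \<notin> set (\<Lambda> i)"
      using \<Lambda> by (rule S_m_parts_nonzero)
    show "set_mset (\<Gamma> i) \<subseteq> {1..q}"
      using \<Gamma> i by (auto simp: marked_colourings_def supp_m_def)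
    show "multiplicities (\<Gamma> i) = mset (\<Lambda> i)"
      using type by (auto simp flip: mset_partition_type)
  qed simp
  finally show ?thesis .
qed

lemma hyp_chrom_G_eq:
  assumes \<Lambda>: "\<Lambda> \<in> S_m n Vsp m"
  shows "hyp_chrom (G_verts n m \<Lambda>) (G_edges n E m \<Lambda>) q =
    card {\<Gamma> \<in> marked_colourings n E Vsp m q. partition_type \<circ> \<Gamma> = \<Lambda>} * (\<Prod>i\<in>supp_m n m. mult_fact (\<Lambda> i))"
proof -
  let ?P = "proper_colourings (G_verts n m \<Lambda>) (G_edges n E m \<Lambda>) q"
    and ?B = "{\<Gamma> \<in> marked_colourings n E Vsp m q. partition_type \<circ> \<Gamma> = \<Lambda>}"
  have "finite ?P"
    by (simp add: finite_proper_colourings G_verts_eq_Sigma finite_supp_m)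
  moreover have "finite ?B"
    using finite_marked_colourings by simp
  moreover have "induced_marking n m \<Lambda> ` ?P \<subseteq> ?B"
    using induced_marking_in_marked_colourings[OF \<Lambda>] partition_type_induced_marking[OF \<Lambda>]
    by (auto simp: proper_colourings_G_iff)
  ultimately have "card ?P = (\<Sum>\<Gamma>\<in>?B. card {c \<in> ?P. induced_marking n m \<Lambda> c = \<Gamma>})"
    using sum.group[where S = ?P and T = ?B and g = "induced_marking n m \<Lambda>" and h = "\<lambda>_. 1 :: nat"]
    by simp
  also have "\<dots> = card ?B * (\<Prod>i\<in>supp_m n m. mult_fact (\<Lambda> i))"
    using card_induced_marking_fibre[OF \<Lambda>] by simp
  finally show ?thesis
    by (simp add: hyp_chrom_eq_card)
qed

theorem proposition5p2:
  fixes n :: nat and E :: "nat set set" and Vsp :: "nat set" and m :: "nat \<Rightarrow> nat" and q :: nat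
  assumes "\<forall>e\<in>E. e \<subseteq> {1..n} \<and> e \<noteq> {}"
    and "Vsp \<subseteq> {1..n}"
    and "1 \<le> q"
  shows "real (marked_count n E Vsp m q) =
    (\<Sum>\<Lambda>\<in>S_m n Vsp m. real (hyp_chrom (G_verts n m \<Lambda>) (G_edges n E m \<Lambda>) q) /
        (\<Prod>i\<in>supp_m n m. real (mult_fact (\<Lambda> i))))"
proof -
  let ?M = "marked_colourings n E Vsp m q"
  let ?B = "\<lambda>\<Lambda>. {\<Gamma> \<in> ?M. partition_type \<circ> \<Gamma> = \<Lambda>}"
  have "(\<lambda>\<Gamma>. partition_type \<circ> \<Gamma>) ` ?M \<subseteq> S_m n Vsp m"
    using partition_type_comp_in_S_m by blast
  then have "card ?M = (\<Sum>\<Lambda>\<in>S_m n Vsp m. card (?B \<Lambda>))"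
    using sum.group[OF finite_marked_colourings finite_S_m, where h = "\<lambda>_. 1 :: nat"] by simp
  then have "real (marked_count n E Vsp m q) = (\<Sum>\<Lambda>\<in>S_m n Vsp m. real (card (?B \<Lambda>)))"
    by (simp add: marked_count_eq_card)
  also have "\<dots> = (\<Sum>\<Lambda>\<in>S_m n Vsp m. real (hyp_chrom (G_verts n m \<Lambda>) (G_edges n E m \<Lambda>) q) /
        (\<Prod>i\<in>supp_m n m. real (mult_fact (\<Lambda> i))))"
  proof (rule sum.cong[OF refl])
    fix \<Lambda> assume "\<Lambda> \<in> S_m n Vsp m"
    moreover have "(\<Prod>i\<in>supp_m n m. real (mult_fact (\<Lambda> i))) \<noteq> 0"
      by (simp add: finite_supp_m mult_fact_pos[THEN gr_implies_not0])
    ultimately show "real (card (?B \<Lambda>)) =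
        real (hyp_chrom (G_verts n m \<Lambda>) (G_edges n E m \<Lambda>) q) / (\<Prod>i\<in>supp_m n m. real (mult_fact (\<Lambda> i)))"
      by (simp add: hyp_chrom_G_eq)
  qed
  finally show ?thesis .
qed

end
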